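(* Under the standing assumptions, there is a constant $C>0$ such that the following holds: if $z\in E\setminus J$, $n\ge0$, $x\in T^{-n}(z)$ and $r>0$ satisfy $|(T^n)'(x)|\ge 1/r$, then $\mathrm{dist}(x,J)\le C r$.
   Context: Standing assumptions: $T$ is a rational map of degree $d\ge2$ whose Julia set $J$ is a bounded subset of $\mathbb{C}$, $J\ne\mathbb{C}_\infty$; $E\subseteq\mathbb{C}$ is non-empty and compact; $U\subseteq\mathbb{C}$ is a simply connected open set with $E\subseteq U$, $U\cap P(T)=\emptyset$, $U\cap J\ne\emptyset$, where $P(T)=\overline{\bigcup_{n\ge1}T^n(\mathrm{Crit}(T))}$ is the post-critical set; the orbital set $\bigcup_{k\ge0}T^{-k}(E)$ is bounded in $\mathbb{C}$. $\mathrm{dist}(x,J)=\inf\{|x-y|:y\in J\}$. *)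

theory Defs
  imports "HOL-Analysis.Analysis" "HOL-Computational_Algebra.Polynomial_Factorial"
begin

text \<open>The Riemann sphere is modelled as complex option, None being the point at infinity,
  equipped with the chordal metric.\<close>

definition chordal :: "complex option \<Rightarrow> complex option \<Rightarrow> real" where
  "chordal a b = (case a of
      None \<Rightarrow> (case b of None \<Rightarrow> 0 | Some w \<Rightarrow> 2 / sqrt (1 + (cmod w)\<^sup>2))
    | Some z \<Rightarrow> (case b of None \<Rightarrow> 2 / sqrt (1 + (cmod z)\<^sup>2)
                | Some w \<Rightarrow> 2 * cmod (z - w) / sqrt ((1 + (cmod z)\<^sup>2) * (1 + (cmod w)\<^sup>2))))"

definition sph_ball :: "complex option \<Rightarrow> real \<Rightarrow> complex option set" where
  "sph_ball a e = {b. chordal a b < e}"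

definition sph_open :: "complex option set \<Rightarrow> bool" where
  "sph_open V \<longleftrightarrow> (\<forall>a\<in>V. \<exists>e>0. sph_ball a e \<subseteq> V)"

definition sph_closure :: "complex option set \<Rightarrow> complex option set" where
  "sph_closure S = {a. \<forall>e>0. \<exists>s\<in>S. chordal a s < e}"

definition rat_map :: "complex poly \<Rightarrow> complex poly \<Rightarrow> complex option \<Rightarrow> complex option" where
  "rat_map p q a = (case a of
      None \<Rightarrow> (if degree q < degree p then None
               else if degree p = degree q then Some (lead_coeff p / lead_coeff q)
               else Some 0)
    | Some z \<Rightarrow> (if poly q z = 0 then None else Some (poly p z / poly q z)))"

definition rat_degree :: "complex poly \<Rightarrow> complex poly \<Rightarrow> nat" where
  "rat_degree p q = max (degree p) (degree q)"

definition iter_normal_on :: "complex poly \<Rightarrow> complex poly \<Rightarrow> complex option set \<Rightarrow> bool" where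
  "iter_normal_on p q V \<longleftrightarrow>
     (\<forall>ns :: nat \<Rightarrow> nat. \<exists>(s :: nat \<Rightarrow> nat) (g :: complex option \<Rightarrow> complex option). strict_mono s \<and>
        (\<forall>a\<in>V. \<exists>e>0. \<forall>eps>0. \<exists>N. \<forall>k\<ge>N. \<forall>b\<in>V \<inter> sph_ball a e.
            chordal ((rat_map p q ^^ ns (s k)) b) (g b) < eps))"

definition fatou_set :: "complex poly \<Rightarrow> complex poly \<Rightarrow> complex option set" where
  "fatou_set p q = {a. \<exists>V. sph_open V \<and> a \<in> V \<and> iter_normal_on p q V}"

definition julia_set :: "complex poly \<Rightarrow> complex poly \<Rightarrow> complex option set" where
  "julia_set p q = UNIV - fatou_set p q"

definition crit_points :: "complex poly \<Rightarrow> complex poly \<Rightarrow> complex option set" where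
  "crit_points p q = {c. \<forall>e>0. \<not> inj_on (rat_map p q) (sph_ball c e)}"

definition postcrit :: "complex poly \<Rightarrow> complex poly \<Rightarrow> complex option set" where
  "postcrit p q = sph_closure (\<Union>n\<in>{1..}. (rat_map p q ^^ n) ` crit_points p q)"

end

theory Submission
  imports Defs "HOL-Complex_Analysis.Complex_Analysis"
    "HOL-Computational_Algebra.Fundamental_Theorem_Algebra"
begin

text \<open>Pick w \<in> J \<inter> U. As U avoids the postcritical set, no iterated preimage of w is
  critical; since T maps non-critical Fatou points into the Fatou set, every iterated preimage
  of w lies in J, and w has three distinct second preimages c1, c2, c3. On the disc of radius
  \<delta> = dist(x, J) about x the map T^n therefore omits c1, c2, c3. Composing with the
  Moebius map sending them to 0, 1, \<infinity> gives a holomorphic function omitting 0 and 1,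
  so Schottky's theorem and the Cauchy inequality bound \<delta> |(T^n)'(x)| by a constant
  depending only on z = T^n(x), which ranges over the bounded set E (choosing the
  point sent to \<infinity> away from z). Hence \<delta> \<le> C r.\<close>

section \<open>Charts and the chordal metric on the Riemann sphere\<close>

definition inv_chart :: "complex \<Rightarrow> complex option" where
  "inv_chart v = (if v = 0 then None else Some (1 / v))"

definition sph_chart :: "bool \<Rightarrow> complex \<Rightarrow> complex option" where
  "sph_chart b = (if b then Some else inv_chart)"

lemma sph_chart_inject: "sph_chart b u = sph_chart b v \<Longrightarrow> u = v"
  by (cases b) (auto simp: sph_chart_def inv_chart_def split: if_splits)

lemma sph_chart_surj: "\<exists>b u. a = sph_chart b u"
  by (cases a) (auto simp: sph_chart_def inv_chart_def intro: exI[of _ True] exI[of _ False])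

lemma chordal_self [simp]: "chordal a a = 0"
  by (cases a) (simp_all add: chordal_def)

lemma chordal_commute: "chordal a b = chordal b a"
  by (cases a; cases b) (simp_all add: chordal_def norm_minus_commute mult.commute)

lemma chordal_Some_le: "chordal (Some u) (Some v) \<le> 2 * cmod (u - v)"
proof -
  have "1 \<le> (1 + (cmod u)\<^sup>2) * (1 + (cmod v)\<^sup>2)"
    by (simp add: algebra_simps add_increasing)
  then have "1 \<le> sqrt ((1 + (cmod u)\<^sup>2) * (1 + (cmod v)\<^sup>2))"
    by simp
  then show ?thesis
    by (simp add: chordal_def divide_le_eq mult_le_cancel_left1)
qed

lemma sqrt_one_plus_inverse_square:
  assumes "A > 0" shows "sqrt (1 + (1 / A)\<^sup>2) = sqrt (1 + A\<^sup>2) / (A::real)"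
proof -
  have "1 + (1 / A)\<^sup>2 = (1 + A\<^sup>2) / A\<^sup>2"
    using assms by (simp add: field_simps)
  then show ?thesis
    using assms by (simp add: real_sqrt_divide)
qed

lemma chordal_inv_chart_0: "chordal (inv_chart 0) (inv_chart v) = chordal (Some 0) (Some v)"
proof (cases "v = 0")
  case False
  then show ?thesis
    by (simp add: chordal_def inv_chart_def norm_divide sqrt_one_plus_inverse_square)
qed (simp add: chordal_def inv_chart_def)

lemma chordal_inv_chart: "chordal (inv_chart u) (inv_chart v) = chordal (Some u) (Some v)"
proof -
  consider "u = 0" | "v = 0" | "u \<noteq> 0" "v \<noteq> 0"
    by blast
  then show ?thesis
  proof cases
    case 3
    let ?A = "cmod u" and ?B = "cmod v"
    have "cmod (1/u - 1/v) = cmod (u - v) / (?A * ?B)"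
      using 3 by (simp add: field_simps norm_divide norm_mult norm_minus_commute)
    moreover have "sqrt ((1 + (1/?A)\<^sup>2) * (1 + (1/?B)\<^sup>2)) = sqrt ((1 + ?A\<^sup>2) * (1 + ?B\<^sup>2)) / (?A * ?B)"
      using 3 by (simp add: real_sqrt_mult sqrt_one_plus_inverse_square)
    ultimately show ?thesis
      using 3 by (simp add: chordal_def inv_chart_def norm_divide)
  next
    case 1
    then show ?thesis
      by (simp add: chordal_inv_chart_0)
  next
    case 2
    then show ?thesis
      using chordal_inv_chart_0[of u] by (simp add: chordal_commute[of _ "inv_chart 0"] chordal_commute[of _ "Some 0"])
  qed
qed

lemma chordal_sph_chart_le: "chordal (sph_chart b u) (sph_chart b v) \<le> 2 * cmod (u - v)"
  using chordal_Some_le by (simp add: sph_chart_def chordal_inv_chart)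

lemma div_add_self_mono:
  fixes A s t :: real
  assumes "0 < A" "0 \<le> s" "s \<le> t"
  shows "s / (A + s) \<le> t / (A + t)"
  using assms by (simp add: divide_simps mult_left_mono algebra_simps)

lemma chordal_Some_ge:
  assumes "\<eta> > 0" "\<eta> \<le> cmod (v - w)"
  shows "2 * \<eta> / (sqrt (1 + (cmod w)\<^sup>2) * (1 + cmod w + \<eta>)) \<le> chordal (Some w) (Some v)"
proof -
  define s where "s = sqrt (1 + (cmod w)\<^sup>2)"
  define A where "A = 1 + cmod w"
  define t where "t = cmod (v - w)"
  define s' where "s' = sqrt (1 + (cmod v)\<^sup>2)"
  have "s \<ge> 1" "A > 0" "s' > 0"
    by (simp_all add: s_def A_def s'_def add_pos_nonneg)
  have "s' \<le> sqrt ((1 + cmod v) ^ 2)"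
    unfolding s'_def by (intro real_sqrt_le_mono) (simp add: power2_eq_square algebra_simps)
  also have "\<dots> \<le> A + t"
    using norm_triangle_ineq2[of v w] by (simp add: A_def t_def)
  finally have "s' \<le> A + t" .
  have "2 * \<eta> / (s * (A + \<eta>)) = 2 / s * (\<eta> / (A + \<eta>))"
    by simp
  also have "\<dots> \<le> 2 / s * (t / (A + t))"
    using \<open>A > 0\<close> assms \<open>s \<ge> 1\<close> by (intro mult_left_mono div_add_self_mono) (auto simp: t_def)
  also have "\<dots> \<le> 2 / s * (t / s')"
    using \<open>s' > 0\<close> \<open>s' \<le> A + t\<close> \<open>s \<ge> 1\<close> by (intro mult_left_mono divide_left_mono) (auto simp: t_def)
  also have "\<dots> = chordal (Some w) (Some v)"
    by (simp add: chordal_def s_def s'_def t_def real_sqrt_mult norm_minus_commute)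
  finally show ?thesis
    by (simp add: s_def A_def)
qed

lemma sph_ball_Some_subset_ball:
  assumes "\<eta> > 0"
  obtains \<epsilon> where "\<epsilon> > 0" "sph_ball (Some w) \<epsilon> \<subseteq> Some ` ball w \<eta>"
proof
  define s where "s = sqrt (1 + (cmod w)\<^sup>2)"
  define \<epsilon> where "\<epsilon> = min (2 / s) (2 * \<eta> / (s * (1 + cmod w + \<eta>)))"
  show "\<epsilon> > 0"
    using assms by (simp add: \<epsilon>_def s_def add_pos_nonneg)
  show "sph_ball (Some w) \<epsilon> \<subseteq> Some ` ball w \<eta>"
  proof
    fix b assume b: "b \<in> sph_ball (Some w) \<epsilon>"
    show "b \<in> Some ` ball w \<eta>"
    proof (cases b)
      case None
      then show ?thesis
        using b by (simp add: sph_ball_def \<epsilon>_def s_def chordal_def)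
    next
      case (Some v)
      have "cmod (v - w) < \<eta>"
      proof (rule ccontr)
        assume "\<not> cmod (v - w) < \<eta>"
        then have "\<epsilon> \<le> chordal (Some w) (Some v)"
          using chordal_Some_ge[OF assms, of v w] by (simp add: \<epsilon>_def s_def)
        then show False
          using b Some by (simp add: sph_ball_def)
      qed
      then show ?thesis
        using Some by (simp add: dist_norm norm_minus_commute)
    qed
  qed
qed

lemma sph_ball_Some_subset_open:
  assumes "open W" "w \<in> W"
  obtains \<epsilon> where "\<epsilon> > 0" "sph_ball (Some w) \<epsilon> \<subseteq> Some ` W"
proof -
  obtain \<eta> where "\<eta> > 0" "ball w \<eta> \<subseteq> W"
    using assms openE by blast
  moreover obtain \<epsilon> where "\<epsilon> > 0" "sph_ball (Some w) \<epsilon> \<subseteq> Some ` ball w \<eta>"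
    using sph_ball_Some_subset_ball[OF \<open>\<eta> > 0\<close>] by blast
  ultimately show ?thesis
    using that by blast
qed

lemma sph_open_Some_image: "open W \<Longrightarrow> sph_open (Some ` W)"
  unfolding sph_open_def by (metis imageE sph_ball_Some_subset_open)

lemma subset_sph_closure: "S \<subseteq> sph_closure S"
proof
  fix a assume "a \<in> S"
  then have "\<exists>s\<in>S. chordal a s < e" if "e > 0" for e
    using that by (intro bexI[of _ a]) simp_all
  then show "a \<in> sph_closure S"
    unfolding sph_closure_def by blast
qed

section \<open>Normality of iterates\<close>

text \<open>On V' we have T^n = T^(n+1) \<circ> \<sigma>, so a limit g of a subsequence of
  T^(n_k+1) on V gives the limit g \<circ> \<sigma> on V'.\<close>

lemma iter_normal_on_section:
  assumes normal: "iter_normal_on p q V"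
    and branch: "\<And>v. v \<in> V' \<Longrightarrow> \<sigma> v \<in> V \<and> rat_map p q (\<sigma> v) = v"
    and cont: "\<And>a e. a \<in> V' \<Longrightarrow> e > 0 \<Longrightarrow> \<exists>d>0. \<forall>v\<in>V' \<inter> sph_ball a d. \<sigma> v \<in> sph_ball (\<sigma> a) e"
  shows "iter_normal_on p q V'"
  unfolding iter_normal_on_def
proof
  fix ns :: "nat \<Rightarrow> nat"
  let ?T = "rat_map p q"
  obtain s :: "nat \<Rightarrow> nat" and g where s: "strict_mono s" and conv: "\<forall>a\<in>V. \<exists>e>0. \<forall>eps>0. \<exists>N. \<forall>k\<ge>N.
      \<forall>b\<in>V \<inter> sph_ball a e. chordal ((?T ^^ Suc (ns (s k))) b) (g b) < eps"
    using normal[unfolded iter_normal_on_def, THEN spec, of "\<lambda>k. Suc (ns k)"] by blast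
  have shift: "(?T ^^ n) v = (?T ^^ Suc n) (\<sigma> v)" if "v \<in> V'" for v n
    using branch[OF that] by (simp add: funpow_swap1)
  have "\<exists>d>0. \<forall>eps>0. \<exists>N. \<forall>k\<ge>N. \<forall>b\<in>V' \<inter> sph_ball a d.
      chordal ((?T ^^ ns (s k)) b) ((g \<circ> \<sigma>) b) < eps" if a: "a \<in> V'" for a
  proof -
    obtain e where "e > 0" and e: "\<forall>eps>0. \<exists>N. \<forall>k\<ge>N. \<forall>b\<in>V \<inter> sph_ball (\<sigma> a) e.
        chordal ((?T ^^ Suc (ns (s k))) b) (g b) < eps"
      using conv branch[OF a] by blast
    obtain d where "d > 0" and d: "\<forall>v\<in>V' \<inter> sph_ball a d. \<sigma> v \<in> sph_ball (\<sigma> a) e"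
      using cont[OF a \<open>e > 0\<close>] by blast
    have "\<exists>N. \<forall>k\<ge>N. \<forall>b\<in>V' \<inter> sph_ball a d. chordal ((?T ^^ ns (s k)) b) ((g \<circ> \<sigma>) b) < eps"
      if "eps > 0" for eps
    proof -
      obtain N where N: "\<forall>k\<ge>N. \<forall>b\<in>V \<inter> sph_ball (\<sigma> a) e. chordal ((?T ^^ Suc (ns (s k))) b) (g b) < eps"
        using e \<open>eps > 0\<close> by blast
      have "chordal ((?T ^^ ns (s k)) v) ((g \<circ> \<sigma>) v) < eps" if "k \<ge> N" "v \<in> V' \<inter> sph_ball a d" for k v
      proof -
        have "\<sigma> v \<in> V \<inter> sph_ball (\<sigma> a) e"
          using d branch that(2) by blast
        then have "chordal ((?T ^^ Suc (ns (s k))) (\<sigma> v)) (g (\<sigma> v)) < eps"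
          using N that(1) by blast
        then show ?thesis
          using shift that(2) by simp
      qed
      then show ?thesis
        by blast
    qed
    then show ?thesis
      using \<open>d > 0\<close> by blast
  qed
  then show "\<exists>(s :: nat \<Rightarrow> nat) g. strict_mono s \<and> (\<forall>a\<in>V'. \<exists>e>0. \<forall>eps>0. \<exists>N. \<forall>k\<ge>N.
      \<forall>b\<in>V' \<inter> sph_ball a e. chordal ((?T ^^ ns (s k)) b) (g b) < eps)"
    using s by blast
qed

lemma iter_normal_on_holomorphic_image:
  assumes normal: "iter_normal_on p q V" and "open B" "R holomorphic_on B" "inj_on R B"
    and chart: "\<And>u. u \<in> B \<Longrightarrow> sph_chart b u \<in> V \<and> rat_map p q (sph_chart b u) = Some (R u)"
  shows "iter_normal_on p q (Some ` R ` B)"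
proof -
  have open_image: "open (R ` S)" if "S \<subseteq> B" "open S" for S
    using that assms(3,4) by (meson holomorphic_on_subset inj_on_subset open_mapping_thm3)
  define \<sigma> where "\<sigma> v = sph_chart b (inv_into B R (the v))" for v
  have \<sigma>: "\<sigma> (Some (R u)) = sph_chart b u" if "u \<in> B" for u
    using that \<open>inj_on R B\<close> by (simp add: \<sigma>_def)
  show ?thesis
  proof (rule iter_normal_on_section[OF normal])
    show "\<sigma> v \<in> V \<and> rat_map p q (\<sigma> v) = v" if "v \<in> Some ` R ` B" for v
      using that \<sigma> chart by auto
    show "\<exists>d>0. \<forall>v\<in>Some ` R ` B \<inter> sph_ball a d. \<sigma> v \<in> sph_ball (\<sigma> a) e"
      if a_in: "a \<in> Some ` R ` B" and "e > 0" for a e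
    proof -
      obtain u where "u \<in> B" and a: "a = Some (R u)"
        using a_in by blast
      then obtain r where "r > 0" "ball u r \<subseteq> B"
        using \<open>open B\<close> openE by blast
      define r' where "r' = min r (e / 2)"
      have "ball u r' \<subseteq> B" "r' > 0"
        using \<open>ball u r \<subseteq> B\<close> \<open>r > 0\<close> \<open>e > 0\<close> by (auto simp: r'_def)
      moreover have "R u \<in> R ` ball u r'"
        using \<open>r' > 0\<close> by simp
      ultimately obtain d where "d > 0" and d: "sph_ball a d \<subseteq> Some ` R ` ball u r'"
        using sph_ball_Some_subset_open[OF open_image] a by blast
      have "\<sigma> v \<in> sph_ball (\<sigma> a) e" if "v \<in> sph_ball a d" for v
      proof -
        obtain u' where u': "u' \<in> ball u r'" "v = Some (R u')"
          using d \<open>v \<in> sph_ball a d\<close> by blast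
        then have "chordal (\<sigma> a) (\<sigma> v) \<le> 2 * cmod (u - u')"
          using \<sigma> a \<open>u \<in> B\<close> \<open>ball u r' \<subseteq> B\<close> chordal_sph_chart_le by auto
        also have "\<dots> < e"
          using u'(1) by (simp add: r'_def dist_norm)
        finally show ?thesis
          by (simp add: sph_ball_def)
      qed
      then show ?thesis
        using \<open>d > 0\<close> by blast
    qed
  qed
qed

lemma holomorphic_on_ball_isCont: "f holomorphic_on ball z r \<Longrightarrow> r > 0 \<Longrightarrow> isCont f z"
  using holomorphic_on_imp_continuous_on continuous_on_eq_continuous_at
  by (metis centre_in_ball open_ball)

lemma holomorphic_on_compose_ball:
  assumes "\<phi> holomorphic_on ball z0 \<rho>" "\<rho> > 0" "\<psi> holomorphic_on ball (\<phi> z0) \<epsilon>" "\<epsilon> > 0"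
  obtains \<rho>' where "0 < \<rho>'" "\<rho>' \<le> \<rho>" "\<phi> ` ball z0 \<rho>' \<subseteq> ball (\<phi> z0) \<epsilon>"
    "(\<psi> \<circ> \<phi>) holomorphic_on ball z0 \<rho>'"
proof -
  have "isCont \<phi> z0"
    using assms(1,2) by (rule holomorphic_on_ball_isCont)
  then obtain d where d: "d > 0" "\<phi> ` ball z0 d \<subseteq> ball (\<phi> z0) \<epsilon>"
    using continuous_at_ball assms(4) by blast
  define \<rho>' where "\<rho>' = min d \<rho>"
  have sub: "ball z0 \<rho>' \<subseteq> ball z0 \<rho>" "ball z0 \<rho>' \<subseteq> ball z0 d"
    unfolding \<rho>'_def by auto
  have "(\<psi> \<circ> \<phi>) holomorphic_on ball z0 \<rho>'"
    using sub d
    by (intro holomorphic_on_compose_gen[OF holomorphic_on_subset[OF assms(1)] assms(3)]) auto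
  moreover have "\<phi> ` ball z0 \<rho>' \<subseteq> ball (\<phi> z0) \<epsilon>"
    using sub d by blast
  ultimately show ?thesis
  proof (intro that)
    show "0 < \<rho>'" "\<rho>' \<le> \<rho>"
      using d assms(2) by (simp_all add: \<rho>'_def)
  qed
qed

lemma isCont_nonzero_ball:
  fixes f :: "complex \<Rightarrow> complex"
  assumes "isCont f w" "f w \<noteq> 0"
  obtains \<epsilon> where "\<epsilon> > 0" "\<And>u. u \<in> ball w \<epsilon> \<Longrightarrow> f u \<noteq> 0"
  using continuous_at_avoid[OF assms] by (auto simp: mem_ball)

definition sph_holomorphic_at :: "(complex \<Rightarrow> complex option) \<Rightarrow> complex \<Rightarrow> bool" where
  "sph_holomorphic_at F z0 \<longleftrightarrow>
     (\<exists>\<rho>>0. \<exists>\<phi> b. \<phi> holomorphic_on ball z0 \<rho> \<and> (\<forall>z\<in>ball z0 \<rho>. F z = sph_chart b (\<phi> z)))"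

lemma sph_holomorphic_at_Some:
  assumes "\<phi> holomorphic_on S" "open S" "z0 \<in> S"
  shows "sph_holomorphic_at (\<lambda>z. Some (\<phi> z)) z0"
proof -
  obtain \<rho> where "\<rho> > 0" "ball z0 \<rho> \<subseteq> S"
    using assms(2,3) openE by blast
  then show ?thesis
    unfolding sph_holomorphic_at_def sph_chart_def
    by (intro exI[of _ \<rho>] exI[of _ \<phi>] exI[of _ True]) (auto intro: holomorphic_on_subset[OF assms(1)])
qed

lemma sph_chart_finite_near:
  assumes "\<psi> holomorphic_on ball u0 \<epsilon>" "\<epsilon> > 0" "sph_chart b (\<psi> u0) \<noteq> None"
  obtains \<epsilon>' R where "0 < \<epsilon>'" "\<epsilon>' \<le> \<epsilon>" "R holomorphic_on ball u0 \<epsilon>'"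
    "\<And>u. u \<in> ball u0 \<epsilon>' \<Longrightarrow> sph_chart b (\<psi> u) = Some (R u)"
proof (cases b)
  case True
  then show ?thesis
    using that assms(1,2) by (simp add: sph_chart_def)
next
  case False
  then have "\<psi> u0 \<noteq> 0"
    using assms(3) by (auto simp: sph_chart_def inv_chart_def)
  moreover have "isCont \<psi> u0"
    using assms(1,2) by (rule holomorphic_on_ball_isCont)
  ultimately obtain e where "e > 0" and e: "\<And>u. u \<in> ball u0 e \<Longrightarrow> \<psi> u \<noteq> 0"
    using isCont_nonzero_ball by blast
  have "(\<lambda>u. 1 / \<psi> u) holomorphic_on ball u0 (min e \<epsilon>)"
    using e assms(1) by (intro holomorphic_intros) (auto intro: holomorphic_on_subset)
  moreover have "sph_chart b (\<psi> u) = Some (1 / \<psi> u)" if "u \<in> ball u0 (min e \<epsilon>)" for u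
    using e that False by (simp add: sph_chart_def inv_chart_def)
  ultimately show ?thesis
    using \<open>e > 0\<close> assms(2) by (intro that[of "min e \<epsilon>" "\<lambda>u. 1 / \<psi> u"]) auto
qed

section \<open>Functions omitting three values\<close>

text \<open>Schottky's bound for |z| \<le> 1/2 (where 12 t / (1 - t) = 12), times the factor 4
  from the Cauchy inequality on a circle of radius \<delta>/4.\<close>

definition omitting_deriv_bound :: "real \<Rightarrow> real" where
  "omitting_deriv_bound M = 4 * exp (pi * exp (pi * (14 + 2 * M)))"

lemma omitting_deriv_bound_mono: "M \<le> M' \<Longrightarrow> omitting_deriv_bound M \<le> omitting_deriv_bound M'"
  by (simp add: omitting_deriv_bound_def)

lemma deriv_bound_omitting_0_1:
  assumes holH: "H holomorphic_on ball w \<delta>" and "\<delta> > 0"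
    and omit: "\<And>\<zeta>. \<zeta> \<in> ball w \<delta> \<Longrightarrow> H \<zeta> \<noteq> 0 \<and> H \<zeta> \<noteq> 1"
    and "cmod (H w) \<le> M"
  shows "\<delta> * cmod (deriv H w) \<le> omitting_deriv_bound M"
proof -
  define B where "B = exp (pi * exp (pi * (14 + 2 * M)))"
  define G where "G \<zeta> = H (w + of_real (\<delta> / 2) * \<zeta>)" for \<zeta>
  have G_ball: "w + of_real (\<delta> / 2) * \<zeta> \<in> ball w \<delta>" if "cmod \<zeta> \<le> 1" for \<zeta>
    using that \<open>\<delta> > 0\<close> by (simp add: dist_norm norm_mult)
  have "G holomorphic_on cball 0 1"
    unfolding G_def
    by (rule holomorphic_on_compose_gen[OF _ holH, unfolded o_def])
       (use G_ball in \<open>auto intro!: holomorphic_intros\<close>)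
  have bound: "cmod (H \<xi>) \<le> B" if "cmod (w - \<xi>) = \<delta> / 4" for \<xi>
  proof -
    define \<zeta> where "\<zeta> = 2 * (\<xi> - w) / of_real \<delta>"
    have "cmod \<zeta> = cmod 2 * cmod (\<xi> - w) / cmod (of_real \<delta>)"
      unfolding \<zeta>_def norm_divide norm_mult ..
    also have "\<dots> = 2 * cmod (w - \<xi>) / \<delta>"
      using \<open>\<delta> > 0\<close> by (simp add: norm_minus_commute)
    finally have "cmod \<zeta> = 2 * cmod (w - \<xi>) / \<delta>" .
    then have "cmod \<zeta> = 1 / 2"
      using that \<open>\<delta> > 0\<close> by simp
    then have "cmod (G \<zeta>) \<le> exp (pi * exp (pi * (2 + 2 * M + 12 * (1/2) / (1 - 1/2))))"
      using omit G_ball \<open>cmod (H w) \<le> M\<close>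
      by (intro Schottky[OF \<open>G holomorphic_on cball 0 1\<close>]) (auto simp: G_def)
    moreover have "w + of_real (\<delta> / 2) * \<zeta> = \<xi>"
      using \<open>\<delta> > 0\<close> by (simp add: \<zeta>_def field_simps)
    then have "G \<zeta> = H \<xi>"
      by (simp add: G_def)
    ultimately show ?thesis
      by (simp add: B_def)
  qed
  have "cmod ((deriv ^^ 1) H w) \<le> fact 1 * B / (\<delta> / 4) ^ 1"
  proof (rule Cauchy_inequality)
    show "H holomorphic_on ball w (\<delta> / 4)"
      using holH by (rule holomorphic_on_subset) (use \<open>\<delta> > 0\<close> in auto)
    show "continuous_on (cball w (\<delta> / 4)) H"
      using holomorphic_on_imp_continuous_on[OF holH] by (rule continuous_on_subset) (use \<open>\<delta> > 0\<close> in auto)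
  qed (use bound \<open>\<delta> > 0\<close> in auto)
  then show ?thesis
    using \<open>\<delta> > 0\<close> by (simp add: omitting_deriv_bound_def B_def field_simps)
qed

text \<open>The Moebius transformation sending a, b, c to 0, 1, \<infinity>; its pole c is not
  represented (the value there is the junk value 0).\<close>

definition cross_ratio :: "complex \<Rightarrow> complex \<Rightarrow> complex \<Rightarrow> complex option \<Rightarrow> complex" where
  "cross_ratio a b c v = (case v of
      None \<Rightarrow> (b - c) / (b - a)
    | Some w \<Rightarrow> (b - c) / (b - a) * ((w - a) / (w - c)))"

lemma cross_ratio_eq_0:
  assumes "a \<noteq> b" "b \<noteq> c" "v \<noteq> Some c" "cross_ratio a b c v = 0"
  shows "v = Some a"
  using assms by (cases v) (auto simp: cross_ratio_def)

lemma cross_ratio_eq_1: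
  assumes "a \<noteq> b" "b \<noteq> c" "a \<noteq> c" "v \<noteq> Some c" "cross_ratio a b c v = 1"
  shows "v = Some b"
proof (cases v)
  case None
  then show ?thesis
    using assms by (simp add: cross_ratio_def field_simps)
next
  case (Some w)
  then have "(b - c) * (w - a) = (b - a) * (w - c)"
    using assms by (simp add: cross_ratio_def field_simps)
  then have "(a - c) * (w - b) = 0"
    by (simp add: algebra_simps)
  then show ?thesis
    using Some assms(3) by simp
qed

lemma cross_ratio_has_field_derivative:
  assumes "z \<noteq> c"
  shows "((\<lambda>w. cross_ratio a b c (Some w)) has_field_derivative
           (b - c) / (b - a) * ((a - c) / (z - c)\<^sup>2)) (at z)"
proof -
  have "((\<lambda>w. (b - c) / (b - a) * ((w - a) / (w - c))) has_field_derivative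
          (b - c) / (b - a) * ((1 * (z - c) - (z - a) * 1) / ((z - c) * (z - c)))) (at z)"
    using assms by (intro DERIV_cmult DERIV_divide derivative_eq_intros) auto
  then show ?thesis
    using assms by (simp add: cross_ratio_def power2_eq_square algebra_simps)
qed

lemma inv_chart_ne_Some:
  assumes "inv_chart v \<noteq> Some c"
  shows "1 - c * v \<noteq> 0"
proof
  assume "1 - c * v = 0"
  then have "v \<noteq> 0"
    by auto
  moreover from this have "c = 1 / v"
    using \<open>1 - c * v = 0\<close> by (simp add: field_simps)
  ultimately show False
    using assms by (simp add: inv_chart_def)
qed

lemma cross_ratio_inv_chart:
  assumes "1 - c * v \<noteq> 0"
  shows "cross_ratio a b c (inv_chart v) = (b - c) / (b - a) * ((1 - a * v) / (1 - c * v))"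
proof (cases "v = 0")
  case False
  then have "(1 / v - a) / (1 / v - c) = (1 - a * v) / (1 - c * v)"
    using assms by (simp add: field_simps)
  then show ?thesis
    using False by (simp add: inv_chart_def cross_ratio_def)
qed (simp add: inv_chart_def cross_ratio_def)

lemma cross_ratio_chart_holomorphic:
  assumes "\<phi> holomorphic_on S" "\<And>z. z \<in> S \<Longrightarrow> sph_chart bb (\<phi> z) \<noteq> Some c"
  shows "(\<lambda>z. cross_ratio a b c (sph_chart bb (\<phi> z))) holomorphic_on S"
proof (cases bb)
  case True
  then have "\<phi> z \<noteq> c" if "z \<in> S" for z
    using assms(2)[OF that] by (simp add: sph_chart_def)
  then have "(\<lambda>z. (b - c) / (b - a) * ((\<phi> z - a) / (\<phi> z - c))) holomorphic_on S"
    using assms(1) by (intro holomorphic_intros) auto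
  then show ?thesis
    using True by (simp add: sph_chart_def cross_ratio_def)
next
  case False
  then have ne: "1 - c * \<phi> z \<noteq> 0" if "z \<in> S" for z
    using assms(2)[OF that] inv_chart_ne_Some by (simp add: sph_chart_def)
  then have "(\<lambda>z. (b - c) / (b - a) * ((1 - a * \<phi> z) / (1 - c * \<phi> z))) holomorphic_on S"
    using assms(1) by (intro holomorphic_intros) auto
  then show ?thesis
    by (rule holomorphic_transform) (use False ne in \<open>simp add: sph_chart_def cross_ratio_inv_chart\<close>)
qed

lemma cross_ratio_holomorphic:
  assumes "\<And>z. z \<in> S \<Longrightarrow> sph_holomorphic_at F z" "open S" "\<And>z. z \<in> S \<Longrightarrow> F z \<noteq> Some c"
  shows "(\<lambda>z. cross_ratio a b c (F z)) holomorphic_on S"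
proof -
  have "(\<lambda>z. cross_ratio a b c (F z)) field_differentiable at z0" if z0: "z0 \<in> S" for z0
  proof -
    obtain \<rho>1 \<phi> bb where "\<rho>1 > 0" "\<phi> holomorphic_on ball z0 \<rho>1"
      and F: "\<forall>z\<in>ball z0 \<rho>1. F z = sph_chart bb (\<phi> z)"
      using assms(1)[OF z0] unfolding sph_holomorphic_at_def by blast
    obtain \<rho>2 where "\<rho>2 > 0" "ball z0 \<rho>2 \<subseteq> S"
      using assms(2) z0 openE by blast
    define B where "B = ball z0 (min \<rho>1 \<rho>2)"
    have B: "z \<in> ball z0 \<rho>1" "z \<in> S" if "z \<in> B" for z
      using that \<open>ball z0 \<rho>2 \<subseteq> S\<close> by (auto simp: B_def)
    have "(\<lambda>z. cross_ratio a b c (sph_chart bb (\<phi> z))) holomorphic_on B"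
    proof (rule cross_ratio_chart_holomorphic)
      show "\<phi> holomorphic_on B"
        by (rule holomorphic_on_subset[OF \<open>\<phi> holomorphic_on _\<close>]) (use B(1) in blast)
      show "sph_chart bb (\<phi> z) \<noteq> Some c" if "z \<in> B" for z
        using F assms(3) B[OF that] by metis
    qed
    then have "(\<lambda>z. cross_ratio a b c (F z)) holomorphic_on B"
      by (rule holomorphic_transform) (use F B in simp)
    then show ?thesis
      using \<open>\<rho>1 > 0\<close> \<open>\<rho>2 > 0\<close> by (intro holomorphic_on_imp_differentiable_at) (auto simp: B_def)
  qed
  then show ?thesis
    using assms(2) by (simp add: holomorphic_on_open field_differentiable_def)
qed

lemma cross_ratio_estimates:
  assumes "\<mu> > 0" "\<mu> \<le> cmod (b - a)" "\<mu> \<le> cmod (b - c)" "\<mu> \<le> cmod (a - c)" "\<mu> / 2 \<le> cmod (z - c)"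
    and "cmod a \<le> R" "cmod b \<le> R" "cmod c \<le> R" "cmod z \<le> R"
  shows "cmod (cross_ratio a b c (Some z)) \<le> 8 * R\<^sup>2 / \<mu>\<^sup>2"
    and "\<mu>\<^sup>2 / (8 * R ^ 3) \<le> cmod ((b - c) / (b - a) * ((a - c) / (z - c)\<^sup>2))"
proof -
  have diam: "cmod (u - v) \<le> 2 * R" if "cmod u \<le> R" "cmod v \<le> R" for u v
    using norm_triangle_ineq4[of u v] that by linarith
  have "R > 0"
    using diam[OF assms(7,6)] assms(1,2) by linarith
  have "cmod (cross_ratio a b c (Some z)) = cmod (b - c) / cmod (b - a) * (cmod (z - a) / cmod (z - c))"
    by (simp add: cross_ratio_def norm_mult norm_divide)
  also have "\<dots> \<le> (2 * R / \<mu>) * (2 * R / (\<mu> / 2))"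
  proof (rule mult_mono)
    show "cmod (b - c) / cmod (b - a) \<le> 2 * R / \<mu>"
      by (rule frac_le) (use diam assms \<open>R > 0\<close> in auto)
    show "cmod (z - a) / cmod (z - c) \<le> 2 * R / (\<mu> / 2)"
      by (rule frac_le) (use diam assms \<open>R > 0\<close> in auto)
  qed (use \<open>R > 0\<close> assms(1) in auto)
  also have "\<dots> = 8 * R\<^sup>2 / \<mu>\<^sup>2"
    by (simp add: power2_eq_square)
  finally show "cmod (cross_ratio a b c (Some z)) \<le> 8 * R\<^sup>2 / \<mu>\<^sup>2" .
  have "\<mu>\<^sup>2 / (8 * R ^ 3) = (\<mu> / (2 * R)) * (\<mu> / (2 * R)\<^sup>2)"
    by (simp add: power2_eq_square power3_eq_cube)
  also have "\<dots> \<le> cmod (b - c) / cmod (b - a) * (cmod (a - c) / (cmod (z - c))\<^sup>2)"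
  proof (rule mult_mono)
    show "\<mu> / (2 * R) \<le> cmod (b - c) / cmod (b - a)"
      by (rule frac_le) (use diam assms in auto)
    have "(cmod (z - c))\<^sup>2 \<le> (2 * R)\<^sup>2"
      using diam[OF assms(9,8)] by (intro power_mono) auto
    then show "\<mu> / (2 * R)\<^sup>2 \<le> cmod (a - c) / (cmod (z - c))\<^sup>2"
      by (intro frac_le) (use assms in auto)
  qed (use \<open>R > 0\<close> assms(1) in auto)
  also have "\<dots> = cmod ((b - c) / (b - a) * ((a - c) / (z - c)\<^sup>2))"
    by (simp add: norm_mult norm_divide norm_power)
  finally show "\<mu>\<^sup>2 / (8 * R ^ 3) \<le> cmod ((b - c) / (b - a) * ((a - c) / (z - c)\<^sup>2))" .
qed

lemma half_distance_to_one_of_two: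
  assumes "\<mu> \<le> cmod (c1 - c2)"
  shows "\<mu> / 2 \<le> cmod (z - c1) \<or> \<mu> / 2 \<le> cmod (z - c2)"
proof -
  have "dist c1 c2 \<le> dist c1 z + dist z c2"
    by (rule dist_triangle)
  then show ?thesis
    using assms by (simp add: dist_norm norm_minus_commute) linarith
qed

lemma poly_other_root:
  fixes P :: "complex poly"
  assumes "degree P \<ge> 2" "poly P c = 0" "poly (pderiv P) c \<noteq> 0"
  obtains c' where "c' \<noteq> c" "poly P c' = 0"
proof -
  obtain Q where Q: "P = [:-c, 1:] * Q"
    using assms(2) poly_eq_0_iff_dvd by blast
  have "Q \<noteq> 0"
    using Q assms(1) by auto
  then have "degree P = 1 + degree Q"
    unfolding Q by (subst degree_mult_eq) auto
  then obtain c' where c': "poly Q c' = 0"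
    using alg_closed_imp_poly_has_root[of Q] assms(1) by auto
  have "pderiv P = [:-c, 1:] * pderiv Q + Q * pderiv [:-c, 1:]"
    unfolding Q by (rule pderiv_mult)
  then have "poly (pderiv P) c = poly Q c"
    by (simp add: pderiv_pCons)
  then have "c' \<noteq> c"
    using assms(3) c' by auto
  then show ?thesis
    using that Q c' by simp
qed

lemma poly_inverse_reflect:
  fixes x :: "'a :: field"
  assumes "x \<noteq> 0"
  shows "poly p (1 / x) = poly (reflect_poly p) x / x ^ degree p"
  using poly_reflect_poly_nz[OF assms, of p] assms by (simp add: field_simps)

lemma funpow_prefix_not_None:
  fixes f :: "'a option \<Rightarrow> 'a option"
  assumes "(f ^^ n) a \<in> A" "\<forall>k b. (f ^^ k) b \<in> A \<longrightarrow> b \<noteq> None"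
  shows "\<forall>j\<le>n. (f ^^ j) a \<noteq> None"
proof (intro allI impI)
  fix j assume "j \<le> n"
  then have "(f ^^ (n - j)) ((f ^^ j) a) = (f ^^ n) a"
    by (simp flip: funpow_add[unfolded o_def, THEN fun_cong])
  then show "(f ^^ j) a \<noteq> None"
    using assms by metis
qed

section \<open>Rational maps\<close>

locale rational_map =
  fixes p q :: "complex poly"
  assumes coprime_pq: "coprime p q" and rat_degree_ge_2: "rat_degree p q \<ge> 2"
begin

abbreviation T :: "complex option \<Rightarrow> complex option" where
  "T \<equiv> rat_map p q"

abbreviation rat_fun :: "complex \<Rightarrow> complex" where
  "rat_fun \<equiv> \<lambda>w. poly p w / poly q w"

lemma q_nonzero: "q \<noteq> 0"
proof
  assume "q = 0"
  then have "is_unit p"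
    using coprime_pq by simp
  then have "degree p = 0"
    using is_unit_iff_degree[of p] by (cases "p = 0") auto
  with \<open>q = 0\<close> show False
    using rat_degree_ge_2 by (simp add: rat_degree_def)
qed

lemma p_nonzero: "p \<noteq> 0"
proof
  assume "p = 0"
  then have "is_unit q"
    using coprime_pq by simp
  then have "degree q = 0"
    using is_unit_iff_degree q_nonzero by auto
  with \<open>p = 0\<close> show False
    using rat_degree_ge_2 by (simp add: rat_degree_def)
qed

lemma no_common_root: "poly q c = 0 \<Longrightarrow> poly p c \<noteq> 0"
proof
  assume "poly q c = 0" "poly p c = 0"
  then have "[:-c, 1:] dvd p" "[:-c, 1:] dvd q"
    by (simp_all add: poly_eq_0_iff_dvd)
  then have "is_unit [:-c, 1:]"
    using coprime_pq coprime_common_divisor by blast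
  then show False
    using is_unit_iff_degree[of "[:-c, 1:]"] by simp
qed

lemma rat_map_Some: "T (Some u) = (if poly q u = 0 then None else Some (rat_fun u))"
  by (simp add: rat_map_def)

lemma rat_map_local_chart_Some:
  obtains \<epsilon> \<psi> b' where "\<epsilon> > 0" "\<psi> holomorphic_on ball u0 \<epsilon>"
    "\<And>u. u \<in> ball u0 \<epsilon> \<Longrightarrow> T (Some u) = sph_chart b' (\<psi> u)"
proof (cases "poly q u0 = 0")
  case False
  then obtain \<epsilon> where "\<epsilon> > 0" and \<epsilon>: "\<And>u. u \<in> ball u0 \<epsilon> \<Longrightarrow> poly q u \<noteq> 0"
    using isCont_nonzero_ball[OF poly_isCont] by blast
  have "rat_fun holomorphic_on ball u0 \<epsilon>"
    using \<epsilon> by (intro holomorphic_intros) auto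
  moreover have "T (Some u) = sph_chart True (rat_fun u)" if "u \<in> ball u0 \<epsilon>" for u
    using \<epsilon>[OF that] by (simp add: rat_map_Some sph_chart_def)
  ultimately show ?thesis
    using that \<open>\<epsilon> > 0\<close> by blast
next
  case True
  then obtain \<epsilon> where "\<epsilon> > 0" and \<epsilon>: "\<And>u. u \<in> ball u0 \<epsilon> \<Longrightarrow> poly p u \<noteq> 0"
    using isCont_nonzero_ball[OF poly_isCont] no_common_root by blast
  have "(\<lambda>u. poly q u / poly p u) holomorphic_on ball u0 \<epsilon>"
    using \<epsilon> by (intro holomorphic_intros) auto
  moreover have "T (Some u) = sph_chart False (poly q u / poly p u)" if "u \<in> ball u0 \<epsilon>" for u
    using \<epsilon>[OF that] by (simp add: rat_map_Some sph_chart_def inv_chart_def)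
  ultimately show ?thesis
    using that \<open>\<epsilon> > 0\<close> by blast
qed

lemma rat_map_inv_chart_degree_le:
  assumes "degree p \<le> degree q" "poly (reflect_poly q) u \<noteq> 0"
  shows "T (inv_chart u) =
           Some (u ^ (degree q - degree p) * poly (reflect_poly p) u / poly (reflect_poly q) u)"
proof (cases "u = 0")
  case True
  then show ?thesis
    using assms(1) q_nonzero
    by (cases "degree p = degree q") (simp_all add: rat_map_def inv_chart_def poly_0_coeff_0)
next
  case False
  have "u ^ degree q = u ^ (degree q - degree p) * u ^ degree p"
    using assms(1) by (simp flip: power_add)
  then show ?thesis
    using False assms(2)
    by (simp add: inv_chart_def rat_map_Some poly_inverse_reflect field_simps)
qed

lemma rat_map_inv_chart_degree_gt:
  assumes "degree q < degree p" "poly (reflect_poly p) u \<noteq> 0" "poly (reflect_poly q) u \<noteq> 0"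
  shows "T (inv_chart u) =
           inv_chart (u ^ (degree p - degree q) * poly (reflect_poly q) u / poly (reflect_poly p) u)"
proof (cases "u = 0")
  case True
  then show ?thesis
    using assms(1) by (simp add: rat_map_def inv_chart_def)
next
  case False
  have "u ^ degree p = u ^ (degree p - degree q) * u ^ degree q"
    using assms(1) by (simp flip: power_add)
  then show ?thesis
    using False assms(2,3)
    by (simp add: inv_chart_def rat_map_Some poly_inverse_reflect field_simps)
qed

lemma rat_map_local_chart_inf:
  obtains \<epsilon> \<psi> b' where "\<epsilon> > 0" "\<psi> holomorphic_on ball 0 \<epsilon>"
    "\<And>u. u \<in> ball 0 \<epsilon> \<Longrightarrow> T (inv_chart u) = sph_chart b' (\<psi> u)"
proof -
  define rp rq where "rp = reflect_poly p" and "rq = reflect_poly q"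
  obtain e1 where "e1 > 0" and e1: "\<And>u. u \<in> ball 0 e1 \<Longrightarrow> poly rp u \<noteq> 0"
    using isCont_nonzero_ball[OF poly_isCont, of rp 0] p_nonzero by (auto simp: rp_def)
  obtain e2 where "e2 > 0" and e2: "\<And>u. u \<in> ball 0 e2 \<Longrightarrow> poly rq u \<noteq> 0"
    using isCont_nonzero_ball[OF poly_isCont, of rq 0] q_nonzero by (auto simp: rq_def)
  define \<epsilon> where "\<epsilon> = min e1 e2"
  have "\<epsilon> > 0"
    using \<open>e1 > 0\<close> \<open>e2 > 0\<close> by (simp add: \<epsilon>_def)
  have \<epsilon>: "poly rp u \<noteq> 0" "poly rq u \<noteq> 0" if "u \<in> ball 0 \<epsilon>" for u
    using e1 e2 that by (auto simp: \<epsilon>_def)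
  show ?thesis
  proof (cases "degree p \<le> degree q")
    case True
    show ?thesis
    proof (rule that[OF \<open>\<epsilon> > 0\<close>, of _ True])
      show "(\<lambda>u. u ^ (degree q - degree p) * poly rp u / poly rq u) holomorphic_on ball 0 \<epsilon>"
        using \<epsilon> by (intro holomorphic_intros) auto
    qed (use True \<epsilon> in \<open>simp add: rat_map_inv_chart_degree_le sph_chart_def rp_def rq_def\<close>)
  next
    case False
    show ?thesis
    proof (rule that[OF \<open>\<epsilon> > 0\<close>, of _ False])
      show "(\<lambda>u. u ^ (degree p - degree q) * poly rq u / poly rp u) holomorphic_on ball 0 \<epsilon>"
        using \<epsilon> by (intro holomorphic_intros) auto
    qed (use False \<epsilon> in \<open>simp add: rat_map_inv_chart_degree_gt sph_chart_def rp_def rq_def\<close>)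
  qed
qed

lemma rat_map_local_chart_inv:
  assumes "u0 \<noteq> 0"
  obtains \<epsilon> \<psi> b' where "\<epsilon> > 0" "\<psi> holomorphic_on ball u0 \<epsilon>"
    "\<And>u. u \<in> ball u0 \<epsilon> \<Longrightarrow> T (inv_chart u) = sph_chart b' (\<psi> u)"
proof -
  obtain \<epsilon> \<psi> b' where "\<epsilon> > 0" "\<psi> holomorphic_on ball (1/u0) \<epsilon>"
    and \<psi>: "\<And>u. u \<in> ball (1/u0) \<epsilon> \<Longrightarrow> T (Some u) = sph_chart b' (\<psi> u)"
    using rat_map_local_chart_Some[of "1/u0"] by blast
  have "(\<lambda>u. 1/u) holomorphic_on ball u0 (cmod u0)"
    by (intro holomorphic_intros) (auto simp: dist_norm)
  then obtain \<rho> where "\<rho> > 0" "\<rho> \<le> cmod u0" and \<rho>: "(\<lambda>u. 1/u) ` ball u0 \<rho> \<subseteq> ball (1/u0) \<epsilon>"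
    and hol: "(\<psi> \<circ> (\<lambda>u. 1/u)) holomorphic_on ball u0 \<rho>"
    using holomorphic_on_compose_ball \<open>\<epsilon> > 0\<close> \<open>\<psi> holomorphic_on ball (1/u0) \<epsilon>\<close> assms by force
  have "T (inv_chart u) = sph_chart b' ((\<psi> \<circ> (\<lambda>u. 1/u)) u)" if "u \<in> ball u0 \<rho>" for u
  proof -
    have "u \<noteq> 0"
      using that \<open>\<rho> \<le> cmod u0\<close> by (auto simp: dist_norm)
    then have "T (inv_chart u) = T (Some (1/u))"
      by (simp add: inv_chart_def)
    also have "\<dots> = sph_chart b' (\<psi> (1/u))"
      using \<psi> \<rho> that by blast
    finally show ?thesis
      by simp
  qed
  then show ?thesis
    using that \<open>\<rho> > 0\<close> hol by blast
qed

lemma rat_map_local_chart: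
  obtains \<epsilon> \<psi> b' where "\<epsilon> > 0" "\<psi> holomorphic_on ball u0 \<epsilon>"
    "\<And>u. u \<in> ball u0 \<epsilon> \<Longrightarrow> T (sph_chart b u) = sph_chart b' (\<psi> u)"
proof -
  consider "b" | "\<not> b" "u0 = 0" | "\<not> b" "u0 \<noteq> 0"
    by blast
  then show ?thesis
  proof cases
    case 1
    obtain \<epsilon> \<psi> b' where "\<epsilon> > 0" "\<psi> holomorphic_on ball u0 \<epsilon>"
      "\<And>u. u \<in> ball u0 \<epsilon> \<Longrightarrow> T (Some u) = sph_chart b' (\<psi> u)"
      using rat_map_local_chart_Some[of u0] by blast
    then show ?thesis
      using 1 by (intro that[of \<epsilon> \<psi> b']) (simp_all add: sph_chart_def)
  next
    case 2
    obtain \<epsilon> \<psi> b' where "\<epsilon> > 0" "\<psi> holomorphic_on ball 0 \<epsilon>"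
      "\<And>u. u \<in> ball 0 \<epsilon> \<Longrightarrow> T (inv_chart u) = sph_chart b' (\<psi> u)"
      using rat_map_local_chart_inf by blast
    then show ?thesis
      using 2 by (intro that[of \<epsilon> \<psi> b']) (simp_all add: sph_chart_def)
  next
    case 3
    obtain \<epsilon> \<psi> b' where "\<epsilon> > 0" "\<psi> holomorphic_on ball u0 \<epsilon>"
      "\<And>u. u \<in> ball u0 \<epsilon> \<Longrightarrow> T (inv_chart u) = sph_chart b' (\<psi> u)"
      using rat_map_local_chart_inv[of u0] 3 by blast
    then show ?thesis
      using 3 by (intro that[of \<epsilon> \<psi> b']) (simp_all add: sph_chart_def)
  qed
qed

lemma sph_holomorphic_at_rat_map:
  assumes "sph_holomorphic_at F z0"
  shows "sph_holomorphic_at (T \<circ> F) z0"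
proof -
  obtain \<rho> \<phi> b where "\<rho> > 0" "\<phi> holomorphic_on ball z0 \<rho>" and F: "\<forall>z\<in>ball z0 \<rho>. F z = sph_chart b (\<phi> z)"
    using assms unfolding sph_holomorphic_at_def by blast
  obtain \<epsilon> \<psi> b' where "\<epsilon> > 0" "\<psi> holomorphic_on ball (\<phi> z0) \<epsilon>"
    and \<psi>: "\<And>u. u \<in> ball (\<phi> z0) \<epsilon> \<Longrightarrow> T (sph_chart b u) = sph_chart b' (\<psi> u)"
    using rat_map_local_chart by blast
  obtain \<rho>' where "\<rho>' > 0" "\<rho>' \<le> \<rho>" and \<rho>': "\<phi> ` ball z0 \<rho>' \<subseteq> ball (\<phi> z0) \<epsilon>"
    and hol: "(\<psi> \<circ> \<phi>) holomorphic_on ball z0 \<rho>'"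
    using holomorphic_on_compose_ball \<open>\<rho> > 0\<close> \<open>\<phi> holomorphic_on _\<close> \<open>\<epsilon> > 0\<close> \<open>\<psi> holomorphic_on _\<close>
    by metis
  have "(T \<circ> F) z = sph_chart b' ((\<psi> \<circ> \<phi>) z)" if "z \<in> ball z0 \<rho>'" for z
  proof -
    have "z \<in> ball z0 \<rho>"
      using that \<open>\<rho>' \<le> \<rho>\<close> by auto
    moreover have "\<phi> z \<in> ball (\<phi> z0) \<epsilon>"
      using that \<rho>' by blast
    ultimately show ?thesis
      by (simp add: F \<psi>)
  qed
  then show ?thesis
    unfolding sph_holomorphic_at_def using \<open>\<rho>' > 0\<close> hol by blast
qed

lemma sph_holomorphic_at_iterate:
  "sph_holomorphic_at F z0 \<Longrightarrow> sph_holomorphic_at ((T ^^ n) \<circ> F) z0"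
proof (induction n)
  case (Suc n)
  then have "sph_holomorphic_at (T \<circ> ((T ^^ n) \<circ> F)) z0"
    by (intro sph_holomorphic_at_rat_map)
  then show ?case
    by (simp only: funpow.simps o_assoc)
qed simp

text \<open>The iterate of the complex function agrees with T^n only while no intermediate
  point hits a pole, since division by zero yields 0.\<close>

lemma iterate_Some_holomorphic:
  assumes "\<forall>j\<le>n. (T ^^ j) (Some x) \<noteq> None"
  shows "\<exists>\<rho>>0. (rat_fun ^^ n) holomorphic_on ball x \<rho> \<and>
           (\<forall>y\<in>ball x \<rho>. (T ^^ n) (Some y) = Some ((rat_fun ^^ n) y))"
  using assms
proof (induction n)
  case 0
  then show ?case
    by (intro exI[of _ 1]) (auto intro: holomorphic_intros)
next
  case (Suc n)
  then obtain \<rho> where "\<rho> > 0" "(rat_fun ^^ n) holomorphic_on ball x \<rho>"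
    and \<rho>: "\<forall>y\<in>ball x \<rho>. (T ^^ n) (Some y) = Some ((rat_fun ^^ n) y)"
    by auto
  define w where "w = (rat_fun ^^ n) x"
  have "(T ^^ n) (Some x) = Some w"
    using \<rho> \<open>\<rho> > 0\<close> by (simp add: w_def)
  moreover have "(T ^^ Suc n) (Some x) \<noteq> None"
    using Suc.prems by blast
  ultimately have "T (Some w) \<noteq> None"
    by simp
  then have "poly q w \<noteq> 0"
    by (simp add: rat_map_Some split: if_splits)
  then obtain \<epsilon> where "\<epsilon> > 0" and \<epsilon>: "\<And>u. u \<in> ball w \<epsilon> \<Longrightarrow> poly q u \<noteq> 0"
    using isCont_nonzero_ball[OF poly_isCont] by blast
  have "rat_fun holomorphic_on ball w \<epsilon>"
    using \<epsilon> by (intro holomorphic_intros) auto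
  then obtain \<rho>' where "\<rho>' > 0" "\<rho>' \<le> \<rho>" and \<rho>': "(rat_fun ^^ n) ` ball x \<rho>' \<subseteq> ball w \<epsilon>"
    and hol: "(rat_fun \<circ> (rat_fun ^^ n)) holomorphic_on ball x \<rho>'"
    using holomorphic_on_compose_ball[OF \<open>(rat_fun ^^ n) holomorphic_on _\<close> \<open>\<rho> > 0\<close>, of rat_fun \<epsilon>] \<open>\<epsilon> > 0\<close>
    unfolding w_def by blast
  have "(T ^^ Suc n) (Some y) = Some ((rat_fun ^^ Suc n) y)" if "y \<in> ball x \<rho>'" for y
  proof -
    have "poly q ((rat_fun ^^ n) y) \<noteq> 0"
      using \<epsilon> \<rho>' that by blast
    then show ?thesis
      using \<rho> that \<open>\<rho>' \<le> \<rho>\<close> by (simp add: rat_map_Some)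
  qed
  moreover have "(rat_fun ^^ Suc n) holomorphic_on ball x \<rho>'"
    using hol by (simp only: funpow.simps)
  ultimately show ?case
    using \<open>\<rho>' > 0\<close> by blast
qed

lemma rat_map_local_injective_chart:
  assumes "y \<notin> crit_points p q" "T y \<noteq> None" "e > 0"
  obtains b u0 B R where "open B" "u0 \<in> B" "y = sph_chart b u0" "R holomorphic_on B" "inj_on R B"
    "\<And>u. u \<in> B \<Longrightarrow> T (sph_chart b u) = Some (R u) \<and> sph_chart b u \<in> sph_ball y e"
proof -
  obtain e1 where "e1 > 0" and inj: "inj_on T (sph_ball y e1)"
    using assms(1) unfolding crit_points_def by blast
  obtain b u0 where y: "y = sph_chart b u0"
    using sph_chart_surj by blast
  obtain \<epsilon> \<psi> b' where "\<epsilon> > 0" "\<psi> holomorphic_on ball u0 \<epsilon>"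
    and \<psi>: "\<And>u. u \<in> ball u0 \<epsilon> \<Longrightarrow> T (sph_chart b u) = sph_chart b' (\<psi> u)"
    using rat_map_local_chart by blast
  moreover have "sph_chart b' (\<psi> u0) \<noteq> None"
    using \<psi>[of u0] \<open>\<epsilon> > 0\<close> assms(2) y by simp
  ultimately obtain \<epsilon>' R where "0 < \<epsilon>'" "\<epsilon>' \<le> \<epsilon>" "R holomorphic_on ball u0 \<epsilon>'"
    and R: "\<And>u. u \<in> ball u0 \<epsilon>' \<Longrightarrow> sph_chart b' (\<psi> u) = Some (R u)"
    using sph_chart_finite_near by metis
  define B where "B = ball u0 (min \<epsilon>' (min e1 e / 2))"
  have "open B" "u0 \<in> B"
    using \<open>0 < \<epsilon>'\<close> \<open>e1 > 0\<close> \<open>e > 0\<close> by (simp_all add: B_def)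
  have TR: "T (sph_chart b u) = Some (R u)" if "u \<in> B" for u
    using that \<psi> R \<open>\<epsilon>' \<le> \<epsilon>\<close> by (simp add: B_def)
  have near: "chordal y (sph_chart b u) < min e1 e" if "u \<in> B" for u
  proof -
    have "chordal y (sph_chart b u) \<le> 2 * cmod (u0 - u)"
      unfolding y by (rule chordal_sph_chart_le)
    also have "\<dots> < min e1 e"
      using that by (simp add: B_def dist_norm)
    finally show ?thesis .
  qed
  have "inj_on R B"
  proof
    fix u v assume "u \<in> B" "v \<in> B" "R u = R v"
    then have "T (sph_chart b u) = T (sph_chart b v)"
      by (simp add: TR)
    moreover have "sph_chart b u \<in> sph_ball y e1" "sph_chart b v \<in> sph_ball y e1"
      using near \<open>u \<in> B\<close> \<open>v \<in> B\<close> by (auto simp: sph_ball_def)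
    ultimately show "u = v"
      using inj by (meson inj_onD sph_chart_inject)
  qed
  moreover have "R holomorphic_on B"
    using \<open>R holomorphic_on _\<close> by (rule holomorphic_on_subset) (auto simp: B_def)
  moreover have "sph_chart b u \<in> sph_ball y e" if "u \<in> B" for u
    using near[OF that] by (simp add: sph_ball_def)
  ultimately show ?thesis
    using that \<open>open B\<close> \<open>u0 \<in> B\<close> y TR by blast
qed

lemma rat_map_fatou_set:
  assumes "y \<in> fatou_set p q" "y \<notin> crit_points p q" "T y \<noteq> None"
  shows "T y \<in> fatou_set p q"
proof -
  obtain V where "sph_open V" "y \<in> V" and normal: "iter_normal_on p q V"
    using assms(1) unfolding fatou_set_def by blast
  then obtain e where "e > 0" "sph_ball y e \<subseteq> V"
    unfolding sph_open_def by blast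
  obtain b u0 B R where "open B" "u0 \<in> B" "y = sph_chart b u0" "R holomorphic_on B"
    "inj_on R B" and chart: "\<And>u. u \<in> B \<Longrightarrow> T (sph_chart b u) = Some (R u) \<and> sph_chart b u \<in> sph_ball y e"
    by (rule rat_map_local_injective_chart[OF assms(2,3) \<open>e > 0\<close>]) blast
  have "iter_normal_on p q (Some ` R ` B)"
  proof (rule iter_normal_on_holomorphic_image[OF normal \<open>open B\<close> \<open>R holomorphic_on B\<close> \<open>inj_on R B\<close>])
    fix u assume "u \<in> B"
    then show "sph_chart b u \<in> V \<and> T (sph_chart b u) = Some (R u)"
      using chart[OF \<open>u \<in> B\<close>] \<open>sph_ball y e \<subseteq> V\<close> by blast
  qed
  moreover have "sph_open (Some ` R ` B)"
    by (rule sph_open_Some_image[OF open_mapping_thm3[OF \<open>R holomorphic_on B\<close> \<open>open B\<close> \<open>inj_on R B\<close>]])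
  moreover have "T y = Some (R u0)"
    using chart[OF \<open>u0 \<in> B\<close>] \<open>y = sph_chart b u0\<close> by simp
  then have "T y \<in> Some ` R ` B"
    using \<open>u0 \<in> B\<close> by blast
  ultimately show ?thesis
    unfolding fatou_set_def by blast
qed

lemma rat_map_Some_eq_Some_iff: "T (Some y) = Some a \<longleftrightarrow> poly (p - smult a q) y = 0"
proof
  assume "poly (p - smult a q) y = 0"
  moreover from this have "poly q y \<noteq> 0"
    using no_common_root by force
  ultimately show "T (Some y) = Some a"
    by (simp add: rat_map_Some field_simps)
qed (auto simp: rat_map_Some field_simps split: if_splits)

lemma degree_preimage_poly:
  assumes "T None \<noteq> Some a"
  shows "2 \<le> degree (p - smult a q)"
proof -
  define P where "P = p - smult a q"
  have deg: "2 \<le> max (degree p) (degree q)"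
    using rat_degree_ge_2 by (simp add: rat_degree_def)
  consider "degree q < degree p" | "degree p < degree q" | "degree p = degree q"
    by linarith
  then have "max (degree p) (degree q) \<le> degree P"
  proof cases
    case 1
    then have "coeff P (degree p) = lead_coeff p"
      by (simp add: P_def coeff_eq_0)
    then have "degree p \<le> degree P"
      using p_nonzero by (intro le_degree) simp
    then show ?thesis
      using 1 by simp
  next
    case 2
    then have "a \<noteq> 0"
      using assms by (simp add: rat_map_def)
    moreover have "coeff P (degree q) = - a * lead_coeff q"
      using 2 by (simp add: P_def coeff_eq_0)
    ultimately have "degree q \<le> degree P"
      using q_nonzero by (intro le_degree) simp
    then show ?thesis
      using 2 by simp
  next
    case 3
    then have "lead_coeff p - a * lead_coeff q \<noteq> 0"
      using assms q_nonzero by (auto simp: rat_map_def field_simps)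
    moreover have "coeff P (degree p) = lead_coeff p - a * lead_coeff q"
      using 3 by (simp add: P_def)
    ultimately have "degree p \<le> degree P"
      by (intro le_degree) simp
    then show ?thesis
      using 3 by simp
  qed
  with deg show ?thesis
    unfolding P_def by linarith
qed

lemma noncritical_preimage_simple_root:
  assumes "T (Some c) = Some a" "Some c \<notin> crit_points p q"
  shows "poly (pderiv (p - smult a q)) c \<noteq> 0"
proof -
  have qc: "poly q c \<noteq> 0" and pc: "poly p c = a * poly q c"
    using assms(1) by (auto simp: rat_map_Some split: if_splits)
  obtain e where "e > 0" and inj: "inj_on T (sph_ball (Some c) e)"
    using assms(2) unfolding crit_points_def by blast
  obtain \<epsilon> where "\<epsilon> > 0" and \<epsilon>: "\<And>u. u \<in> ball c \<epsilon> \<Longrightarrow> poly q u \<noteq> 0"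
    using isCont_nonzero_ball[OF poly_isCont qc] by blast
  define B where "B = ball c (min \<epsilon> (e / 2))"
  have "rat_fun holomorphic_on B"
    using \<epsilon> by (intro holomorphic_intros) (auto simp: B_def)
  moreover have "inj_on rat_fun B"
  proof
    fix u v assume uv: "u \<in> B" "v \<in> B" "rat_fun u = rat_fun v"
    then have "T (Some u) = T (Some v)"
      using \<epsilon> by (simp add: rat_map_Some B_def)
    moreover have "Some w \<in> sph_ball (Some c) e" if "w \<in> B" for w
      using chordal_Some_le[of c w] that by (simp add: sph_ball_def B_def dist_norm)
    ultimately show "u = v"
      using inj uv by (meson inj_onD option.inject)
  qed
  ultimately have "deriv rat_fun c \<noteq> 0"
    using holomorphic_injective_imp_regular[of rat_fun B c] \<open>\<epsilon> > 0\<close> \<open>e > 0\<close> by (simp add: B_def)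
  moreover have "deriv rat_fun c =
      (poly (pderiv p) c * poly q c - poly p c * poly (pderiv q) c) / (poly q c * poly q c)"
    by (rule DERIV_imp_deriv) (use qc in \<open>auto intro!: derivative_eq_intros\<close>)
  ultimately have "poly q c * (poly (pderiv p) c - a * poly (pderiv q) c) \<noteq> 0"
    by (simp add: pc algebra_simps)
  then show ?thesis
    by (simp add: pderiv_diff pderiv_smult)
qed

lemma two_preimages:
  assumes "T None \<noteq> Some a" and noncrit: "\<And>y. T (Some y) = Some a \<Longrightarrow> Some y \<notin> crit_points p q"
  obtains y1 y2 where "y1 \<noteq> y2" "T (Some y1) = Some a" "T (Some y2) = Some a"
proof -
  have deg: "2 \<le> degree (p - smult a q)"
    using degree_preimage_poly[OF assms(1)] .
  then obtain c where c: "poly (p - smult a q) c = 0"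
    using alg_closed_imp_poly_has_root[of "p - smult a q"] by auto
  then have "poly (pderiv (p - smult a q)) c \<noteq> 0"
    using noncritical_preimage_simple_root noncrit rat_map_Some_eq_Some_iff by blast
  then obtain c' where "c' \<noteq> c" "poly (p - smult a q) c' = 0"
    using poly_other_root deg c by blast
  then show ?thesis
    using that c rat_map_Some_eq_Some_iff by blast
qed

section \<open>Backward invariance of the Julia set\<close>

lemma iterate_preimage_not_critical:
  assumes "(T ^^ Suc m) y = Some w" "Some w \<notin> postcrit p q"
  shows "y \<notin> crit_points p q"
proof
  assume "y \<in> crit_points p q"
  then have "Some w \<in> (T ^^ Suc m) ` crit_points p q"
    by (rule rev_image_eqI) (rule assms(1)[symmetric])
  then have "Some w \<in> (\<Union>n\<in>{1..}. (T ^^ n) ` crit_points p q)"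
    by (intro UN_I[of "Suc m"]) simp_all
  then have "Some w \<in> postcrit p q"
    unfolding postcrit_def by (rule subsetD[OF subset_sph_closure])
  with assms(2) show False
    by contradiction
qed

lemma iterate_preimage_julia:
  assumes "None \<notin> julia_set p q" "Some w \<in> julia_set p q" "Some w \<notin> postcrit p q"
  shows "(T ^^ m) y = Some w \<Longrightarrow> y \<in> julia_set p q"
proof (induction m arbitrary: y)
  case 0
  then show ?case
    using assms(2) by simp
next
  case (Suc m)
  then have "T y \<in> julia_set p q"
    by (simp add: funpow_swap1)
  moreover from this have "T y \<noteq> None"
    using assms(1) by (cases "T y") auto
  moreover have "y \<notin> crit_points p q"
    using iterate_preimage_not_critical Suc.prems assms(3) by blast
  ultimately show ?case
    using rat_map_fatou_set unfolding julia_set_def by blast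
qed

lemma two_preimages_on_backward_orbit:
  assumes "None \<notin> julia_set p q" "Some w \<in> julia_set p q" "Some w \<notin> postcrit p q"
    and "(T ^^ m) (Some a) = Some w"
  obtains y1 y2 where "y1 \<noteq> y2" "T (Some y1) = Some a" "T (Some y2) = Some a"
proof (rule two_preimages)
  show "T None \<noteq> Some a"
  proof
    assume "T None = Some a"
    then have "(T ^^ Suc m) None = Some w"
      using assms(4) by (simp add: funpow_swap1)
    then show False
      using iterate_preimage_julia assms(1-3) by blast
  qed
  show "Some y \<notin> crit_points p q" if "T (Some y) = Some a" for y
  proof (rule iterate_preimage_not_critical)
    show "(T ^^ Suc m) (Some y) = Some w"
      using that assms(4) by (simp add: funpow_swap1)
  qed (rule assms(3))
qed

lemma three_julia_points:
  assumes "None \<notin> julia_set p q" "Some w \<in> julia_set p q" "Some w \<notin> postcrit p q"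
  obtains c1 c2 c3 where "c1 \<noteq> c2" "c1 \<noteq> c3" "c2 \<noteq> c3"
    "\<And>c n y. c \<in> {c1, c2, c3} \<Longrightarrow> (T ^^ n) y = Some c \<Longrightarrow> y \<in> julia_set p q"
proof -
  obtain b1 b2 where "b1 \<noteq> b2" and b: "T (Some b1) = Some w" "T (Some b2) = Some w"
    by (rule two_preimages_on_backward_orbit[OF assms, of 0]) auto
  obtain c1 c2 where "c1 \<noteq> c2" and c12: "T (Some c1) = Some b1" "T (Some c2) = Some b1"
    by (rule two_preimages_on_backward_orbit[OF assms, of 1 b1]) (use b in auto)
  obtain c3 where c3: "T (Some c3) = Some b2"
    by (rule two_preimages_on_backward_orbit[OF assms, of 1 b2]) (use b in auto)
  have "c1 \<noteq> c3" "c2 \<noteq> c3"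
    using c12 c3 \<open>b1 \<noteq> b2\<close> by auto
  have preimage_julia: "y \<in> julia_set p q" if "c \<in> {c1, c2, c3}" "(T ^^ n) y = Some c" for c n y
  proof -
    have "T (T (Some c)) = Some w"
      using that(1) b c12 c3 by auto
    then have "(T ^^ Suc (Suc n)) y = Some w"
      using that(2) by simp
    then show ?thesis
      using iterate_preimage_julia[OF assms] by blast
  qed
  show ?thesis
    by (rule that[OF \<open>c1 \<noteq> c2\<close> \<open>c1 \<noteq> c3\<close> \<open>c2 \<noteq> c3\<close> preimage_julia])
qed

section \<open>Distance to the Julia set\<close>

lemma cross_ratio_iterate_has_field_derivative:
  assumes fin: "\<forall>j\<le>n. (T ^^ j) (Some x) \<noteq> None" and zx: "(T ^^ n) (Some x) = Some z" and "z \<noteq> c"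
  shows "((\<lambda>y. cross_ratio a b c ((T ^^ n) (Some y))) has_field_derivative
           (b - c) / (b - a) * ((a - c) / (z - c)\<^sup>2) * deriv (rat_fun ^^ n) x) (at x)"
proof -
  obtain \<rho> where "\<rho> > 0" "(rat_fun ^^ n) holomorphic_on ball x \<rho>"
    and \<rho>: "\<forall>y\<in>ball x \<rho>. (T ^^ n) (Some y) = Some ((rat_fun ^^ n) y)"
    using iterate_Some_holomorphic[OF fin] by blast
  have z: "z = (rat_fun ^^ n) x"
    using \<rho> \<open>\<rho> > 0\<close> zx by auto
  have "((\<lambda>y. cross_ratio a b c (Some ((rat_fun ^^ n) y))) has_field_derivative
          (b - c) / (b - a) * ((a - c) / (z - c)\<^sup>2) * deriv (rat_fun ^^ n) x) (at x)"
    unfolding z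
    by (rule DERIV_chain2[OF cross_ratio_has_field_derivative holomorphic_derivI])
       (use \<open>z \<noteq> c\<close> z \<open>(rat_fun ^^ n) holomorphic_on _\<close> \<open>\<rho> > 0\<close> in auto)
  then show ?thesis
    by (rule has_field_derivative_transform_within_open[of _ _ _ "ball x \<rho>"])
       (use \<rho> \<open>\<rho> > 0\<close> in auto)
qed

lemma iterate_deriv_bound_omitting:
  assumes fin: "\<forall>j\<le>n. (T ^^ j) (Some x) \<noteq> None" and "\<delta> > 0"
    and omit: "\<And>y v. y \<in> ball x \<delta> \<Longrightarrow> v \<in> {a, b, c} \<Longrightarrow> (T ^^ n) (Some y) \<noteq> Some v"
    and "a \<noteq> b" "b \<noteq> c" "a \<noteq> c"
    and zx: "(T ^^ n) (Some x) = Some z"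
  shows "\<delta> * (cmod ((b - c) / (b - a) * ((a - c) / (z - c)\<^sup>2)) * cmod (deriv (rat_fun ^^ n) x))
           \<le> omitting_deriv_bound (cmod (cross_ratio a b c (Some z)))"
proof -
  define H where "H y = cross_ratio a b c ((T ^^ n) (Some y))" for y
  have "H holomorphic_on ball x \<delta>"
    unfolding H_def
  proof (rule cross_ratio_holomorphic)
    show "sph_holomorphic_at (\<lambda>y. (T ^^ n) (Some y)) y" for y
      using sph_holomorphic_at_iterate[OF sph_holomorphic_at_Some[of "\<lambda>y. y" UNIV y]]
      by (simp add: o_def)
  qed (use omit in auto)
  moreover have "H y \<noteq> 0 \<and> H y \<noteq> 1" if "y \<in> ball x \<delta>" for y
    using omit[OF that] cross_ratio_eq_0[OF \<open>a \<noteq> b\<close> \<open>b \<noteq> c\<close>]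
      cross_ratio_eq_1[OF \<open>a \<noteq> b\<close> \<open>b \<noteq> c\<close> \<open>a \<noteq> c\<close>]
    unfolding H_def by blast
  ultimately have bound: "\<delta> * cmod (deriv H x) \<le> omitting_deriv_bound (cmod (H x))"
    using \<open>\<delta> > 0\<close> by (intro deriv_bound_omitting_0_1) auto
  have "z \<noteq> c"
    using omit[of x c] \<open>\<delta> > 0\<close> zx by auto
  define D where "D = (b - c) / (b - a) * ((a - c) / (z - c)\<^sup>2)"
  have "(H has_field_derivative D * deriv (rat_fun ^^ n) x) (at x)"
    unfolding H_def D_def by (rule cross_ratio_iterate_has_field_derivative[OF fin zx \<open>z \<noteq> c\<close>])
  then have "cmod (deriv H x) = cmod D * cmod (deriv (rat_fun ^^ n) x)"
    by (simp only: DERIV_imp_deriv norm_mult)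
  moreover have "H x = cross_ratio a b c (Some z)"
    by (simp add: H_def zx)
  ultimately have "\<delta> * (cmod D * cmod (deriv (rat_fun ^^ n) x))
      \<le> omitting_deriv_bound (cmod (cross_ratio a b c (Some z)))"
    using bound by (simp only:)
  then show ?thesis
    by (simp only: D_def)
qed

lemma infdist_julia_le:
  assumes julia: "\<And>y v. (T ^^ n) (Some y) = Some v \<Longrightarrow> v \<in> {a, b, c} \<Longrightarrow> Some y \<in> julia_set p q"
    and fin: "\<forall>j\<le>n. (T ^^ j) (Some x) \<noteq> None" and zx: "(T ^^ n) (Some x) = Some z"
    and dist: "\<mu> > 0" "\<mu> \<le> cmod (b - a)" "\<mu> \<le> cmod (b - c)" "\<mu> \<le> cmod (a - c)" "\<mu> / 2 \<le> cmod (z - c)"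
    and bounds: "cmod a \<le> R" "cmod b \<le> R" "cmod c \<le> R" "cmod z \<le> R" "R > 0"
    and "r > 0" and deriv: "1 / r \<le> cmod (deriv (rat_fun ^^ n) x)"
  shows "infdist x {y. Some y \<in> julia_set p q}
           \<le> omitting_deriv_bound (8 * R\<^sup>2 / \<mu>\<^sup>2) * (8 * R ^ 3 / \<mu>\<^sup>2) * r"
proof -
  define \<delta> where "\<delta> = infdist x {y. Some y \<in> julia_set p q}"
  define K where "K = omitting_deriv_bound (8 * R\<^sup>2 / \<mu>\<^sup>2)"
  have "K > 0"
    by (simp add: K_def omitting_deriv_bound_def)
  show ?thesis
  proof (cases "\<delta> > 0")
    case False
    have "0 \<le> K * (8 * R ^ 3 / \<mu>\<^sup>2) * r"
      using \<open>K > 0\<close> \<open>R > 0\<close> \<open>r > 0\<close> by simp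
    then show ?thesis
      using False unfolding \<delta>_def[symmetric] K_def[symmetric] by linarith
  next
    case True
    have omit: "(T ^^ n) (Some y) \<noteq> Some v" if "y \<in> ball x \<delta>" "v \<in> {a, b, c}" for y v
    proof
      assume "(T ^^ n) (Some y) = Some v"
      then have "\<delta> \<le> dist x y"
        unfolding \<delta>_def using julia that(2) by (intro infdist_le) auto
      then show False
        using that(1) by simp
    qed
    have "a \<noteq> b" "b \<noteq> c" "a \<noteq> c"
      using dist by auto
    have "\<delta> * (\<mu>\<^sup>2 / (8 * R ^ 3) * (1 / r))
        \<le> \<delta> * (cmod ((b - c) / (b - a) * ((a - c) / (z - c)\<^sup>2)) * cmod (deriv (rat_fun ^^ n) x))"
      using cross_ratio_estimates(2)[OF dist bounds(1-4)] True \<open>r > 0\<close> deriv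
      by (intro mult_left_mono mult_mono) auto
    also have "\<dots> \<le> omitting_deriv_bound (cmod (cross_ratio a b c (Some z)))"
      using iterate_deriv_bound_omitting[OF fin True omit \<open>a \<noteq> b\<close> \<open>b \<noteq> c\<close> \<open>a \<noteq> c\<close> zx] .
    also have "\<dots> \<le> K"
      unfolding K_def using cross_ratio_estimates(1)[OF dist bounds(1-4)]
      by (rule omitting_deriv_bound_mono)
    finally show ?thesis
      using \<open>R > 0\<close> \<open>\<mu> > 0\<close> \<open>r > 0\<close> by (simp add: \<delta>_def K_def[symmetric] field_simps)
  qed
qed

lemma infdist_julia_bound:
  assumes "None \<notin> julia_set p q" "Some w \<in> julia_set p q" "Some w \<notin> postcrit p q" "bounded K"
  obtains C where "C > 0"
    "\<And>z n x r. z \<in> K \<Longrightarrow> (T ^^ n) (Some x) = Some z \<Longrightarrow> \<forall>j\<le>n. (T ^^ j) (Some x) \<noteq> None \<Longrightarrow>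
       r > 0 \<Longrightarrow> 1 / r \<le> cmod (deriv (rat_fun ^^ n) x) \<Longrightarrow>
       infdist x {y. Some y \<in> julia_set p q} \<le> C * r"
proof -
  obtain c1 c2 c3 where "c1 \<noteq> c2" "c1 \<noteq> c3" "c2 \<noteq> c3"
    and julia: "\<And>c n y. c \<in> {c1, c2, c3} \<Longrightarrow> (T ^^ n) y = Some c \<Longrightarrow> y \<in> julia_set p q"
    using three_julia_points[OF assms(1-3)] by blast
  have "bounded (K \<union> {c1, c2, c3})"
    using assms(4) by simp
  then obtain R where "R > 0" and R: "\<And>u. u \<in> K \<union> {c1, c2, c3} \<Longrightarrow> cmod u \<le> R"
    unfolding bounded_pos by blast
  define \<mu> where "\<mu> = min (cmod (c1 - c2)) (min (cmod (c1 - c3)) (cmod (c2 - c3)))"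
  have "\<mu> > 0"
    using \<open>c1 \<noteq> c2\<close> \<open>c1 \<noteq> c3\<close> \<open>c2 \<noteq> c3\<close> by (simp add: \<mu>_def)
  have \<mu>: "\<mu> \<le> cmod (u - v)" if "u \<in> {c1, c2, c3}" "v \<in> {c1, c2, c3}" "u \<noteq> v" for u v
    using that by (auto simp: \<mu>_def norm_minus_commute)
  define C where "C = omitting_deriv_bound (8 * R\<^sup>2 / \<mu>\<^sup>2) * (8 * R ^ 3 / \<mu>\<^sup>2)"
  have "C > 0"
    using \<open>R > 0\<close> \<open>\<mu> > 0\<close> by (simp add: C_def omitting_deriv_bound_def)
  moreover have "infdist x {y. Some y \<in> julia_set p q} \<le> C * r"
    if "z \<in> K" "(T ^^ n) (Some x) = Some z" "\<forall>j\<le>n. (T ^^ j) (Some x) \<noteq> None"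
      "r > 0" "1 / r \<le> cmod (deriv (rat_fun ^^ n) x)" for z n x r
  proof -
    have "cmod z \<le> R"
      using R that(1) by blast
    have julia_n: "Some y \<in> julia_set p q" if "(T ^^ n) (Some y) = Some v" "v \<in> {c1, c2, c3}" for y v
      using julia that by blast
    note facts = that \<open>cmod z \<le> R\<close> \<open>R > 0\<close> \<open>\<mu> > 0\<close> \<mu> R julia_n \<open>c1 \<noteq> c2\<close> \<open>c1 \<noteq> c3\<close> \<open>c2 \<noteq> c3\<close>
    consider "\<mu> / 2 \<le> cmod (z - c1)" | "\<mu> / 2 \<le> cmod (z - c2)"
      using half_distance_to_one_of_two[OF \<mu>[of c1 c2]] \<open>c1 \<noteq> c2\<close> by auto
    then show ?thesis
    proof cases
      case 1
      then show ?thesis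
        unfolding C_def using facts by (intro infdist_julia_le[of n c2 c3 c1]) auto
    next
      case 2
      then show ?thesis
        unfolding C_def using facts by (intro infdist_julia_le[of n c1 c3 c2]) auto
    qed
  qed
  ultimately show ?thesis
    using that by blast
qed

end

theorem lemma3p9:
  fixes p q :: "complex poly" and E U :: "complex set"
  assumes "coprime p q" and "rat_degree p q \<ge> 2"
    and "None \<notin> julia_set p q" and "bounded {y. Some y \<in> julia_set p q}"
    and "compact E" and "E \<noteq> {}"
    and "open U" and "simply_connected U" and "E \<subseteq> U"
    and "\<forall>u\<in>U. Some u \<notin> postcrit p q"
    and "\<exists>u\<in>U. Some u \<in> julia_set p q"
    and "\<forall>k w. (rat_map p q ^^ k) w \<in> Some ` E \<longrightarrow> w \<noteq> None"
    and "bounded {x. \<exists>k. (rat_map p q ^^ k) (Some x) \<in> Some ` E}"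
  shows "\<exists>C>0. \<forall>z n x r. z \<in> E \<and> Some z \<notin> julia_set p q
            \<and> (rat_map p q ^^ n) (Some x) = Some z \<and> r > 0
            \<and> cmod (deriv ((\<lambda>w. poly p w / poly q w) ^^ n) x) \<ge> 1 / r
            \<longrightarrow> infdist x {y. Some y \<in> julia_set p q} \<le> C * r"
proof -
  interpret rational_map p q
    using assms(1,2) by unfold_locales
  obtain w where "Some w \<in> julia_set p q" "Some w \<notin> postcrit p q"
    using assms(10,11) by blast
  then obtain C where "C > 0" and C: "\<And>z n x r. z \<in> E \<Longrightarrow> (T ^^ n) (Some x) = Some z \<Longrightarrow>
      \<forall>j\<le>n. (T ^^ j) (Some x) \<noteq> None \<Longrightarrow> r > 0 \<Longrightarrow> 1 / r \<le> cmod (deriv (rat_fun ^^ n) x) \<Longrightarrow>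
      infdist x {y. Some y \<in> julia_set p q} \<le> C * r"
    by (rule infdist_julia_bound[OF assms(3) _ _ compact_imp_bounded[OF assms(5)]]) blast
  show ?thesis
  proof (intro exI[of _ C] conjI allI impI)
    fix z n x r
    assume "z \<in> E \<and> Some z \<notin> julia_set p q \<and> (T ^^ n) (Some x) = Some z \<and> r > 0
      \<and> cmod (deriv (rat_fun ^^ n) x) \<ge> 1 / r"
    moreover from this have "\<forall>j\<le>n. (T ^^ j) (Some x) \<noteq> None"
      using assms(12) by (intro funpow_prefix_not_None[where A = "Some ` E"]) auto
    ultimately show "infdist x {y. Some y \<in> julia_set p q} \<le> C * r"
      using C by blast
  qed (rule \<open>C > 0\<close>)
qed

end
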